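(* Consider $n$ buses with line susceptances $b_{il}=b_{li}\ge 0$ ($b_{ii}=0$; $b_{il}=0$ if there is no line), maximal voltage magnitudes $V_{\max,i}>0$, and an operating point $(V_0,\theta_0)\in\mathbb{R}^n\times\mathbb{R}^n$ satisfying Assumption A. Let $L_B$ be the matrix with entries $$L_{B,ij}=\frac{\partial}{\partial\theta_j}\sum_{l=1}^n V_{0,i}V_{0,l}b_{il}\sin(\theta_i-\theta_l)\Big|_{\theta=\theta_0},$$ let $\gamma_i:=2\sum_{j=1}^n V_{\max,i}V_{\max,j}b_{ij}$, assumed positive for all $i$, and $\Gamma=\operatorname{diag}(\gamma_1,\dots,\gamma_n)$. Then for any conformal partitioning (after a permutation of the bus indices) $$\Gamma=\begin{bmatrix}\Gamma_1&0\\0&\Gamma_2\end{bmatrix},\qquad L_B=\begin{bmatrix}L_{B,11}&L_{B,12}\\ L_{B,21}&L_{B,22}\end{bmatrix}$$ with $L_{B,22}$ invertible (the second block being allowed to be empty, in which case the Schur complement below is $L_B$ itself), $$0\preceq \Gamma_1^{-1/2}\big(L_{B,11}-L_{B,12}L_{B,22}^{-1}L_{B,21}\big)\Gamma_1^{-1/2}\preceq I.$$ In particular $\Gamma^{-1/2}L_B\Gamma^{-1/2}\in\mathcal{L}$.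
   Context: Assumption A: at the operating point, the angle difference $|\theta_{0,i}-\theta_{0,j}|$ across each transmission line (i.e. for each pair with $b_{ij}>0$) is less than $\pi/2$, and the voltage magnitude at each bus satisfies $0<V_{0,i}\le V_{\max,i}$. $\mathcal{L}:=\{L\in\mathbb{R}^{n\times n}: L=L^T,\ 0\preceq L\preceq I\}$. *)

theory Defs
  imports "HOL-Analysis.Analysis"
begin

text \<open>Buses are indexed by a finite type 'n (n = CARD('n)).
  Matrices are functions 'n \<Rightarrow> 'n \<Rightarrow> real; a block of a matrix is its
  restriction to index sets.\<close>

definition power_inj :: "('n::finite \<Rightarrow> 'n \<Rightarrow> real) \<Rightarrow> ('n \<Rightarrow> real) \<Rightarrow> ('n \<Rightarrow> real) \<Rightarrow> 'n \<Rightarrow> real" where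
  "power_inj b V \<theta> i = (\<Sum>l\<in>UNIV. V i * V l * b i l * sin (\<theta> i - \<theta> l))"

definition LB :: "('n::finite \<Rightarrow> 'n \<Rightarrow> real) \<Rightarrow> ('n \<Rightarrow> real) \<Rightarrow> ('n \<Rightarrow> real) \<Rightarrow> 'n \<Rightarrow> 'n \<Rightarrow> real" where
  "LB b V0 \<theta>0 i j = deriv (\<lambda>t. power_inj b V0 (\<theta>0(j := t)) i) (\<theta>0 j)"

definition gam :: "('n::finite \<Rightarrow> 'n \<Rightarrow> real) \<Rightarrow> ('n \<Rightarrow> real) \<Rightarrow> 'n \<Rightarrow> real" where
  "gam b Vmax i = 2 * (\<Sum>j\<in>UNIV. Vmax i * Vmax j * b i j)"

definition assumptionA :: "('n::finite \<Rightarrow> 'n \<Rightarrow> real) \<Rightarrow> ('n \<Rightarrow> real) \<Rightarrow> ('n \<Rightarrow> real) \<Rightarrow> ('n \<Rightarrow> real) \<Rightarrow> bool" where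
  "assumptionA b Vmax V0 \<theta>0 \<longleftrightarrow>
     (\<forall>i j. b i j > 0 \<longrightarrow> \<bar>\<theta>0 i - \<theta>0 j\<bar> < pi / 2) \<and>
     (\<forall>i. 0 < V0 i \<and> V0 i \<le> Vmax i)"

definition is_block_inverse :: "('n \<Rightarrow> 'n \<Rightarrow> real) \<Rightarrow> 'n set \<Rightarrow> ('n \<Rightarrow> 'n \<Rightarrow> real) \<Rightarrow> bool" where
  "is_block_inverse L S M \<longleftrightarrow>
     (\<forall>k\<in>S. \<forall>m\<in>S. (\<Sum>l\<in>S. L k l * M l m) = (if k = m then 1 else 0)) \<and>
     (\<forall>k\<in>S. \<forall>m\<in>S. (\<Sum>l\<in>S. M k l * L l m) = (if k = m then 1 else 0))"

text \<open>Schur complement L11 - L12 M L21, where the first block is T and M = L22^{-1}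
  for the second block S.\<close>
definition schur :: "('n \<Rightarrow> 'n \<Rightarrow> real) \<Rightarrow> 'n set \<Rightarrow> ('n \<Rightarrow> 'n \<Rightarrow> real) \<Rightarrow> 'n \<Rightarrow> 'n \<Rightarrow> real" where
  "schur L S M i j = L i j - (\<Sum>k\<in>S. \<Sum>l\<in>S. L i k * M k l * L l j)"

text \<open>Membership in the set \<open>\<L>\<close> for the block indexed by T:
  symmetric and 0 \<preceq> A \<preceq> I (Loewner order via quadratic forms).\<close>
definition in_calL :: "'n set \<Rightarrow> ('n \<Rightarrow> 'n \<Rightarrow> real) \<Rightarrow> bool" where
  "in_calL T A \<longleftrightarrow>
     (\<forall>i\<in>T. \<forall>j\<in>T. A i j = A j i) \<and>
     (\<forall>x::'n \<Rightarrow> real. 0 \<le> (\<Sum>i\<in>T. \<Sum>j\<in>T. x i * A i j * x j)) \<and>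
     (\<forall>x::'n \<Rightarrow> real. (\<Sum>i\<in>T. \<Sum>j\<in>T. x i * A i j * x j) \<le> (\<Sum>i\<in>T. x i ^ 2))"

definition gscale :: "('n \<Rightarrow> real) \<Rightarrow> ('n \<Rightarrow> 'n \<Rightarrow> real) \<Rightarrow> 'n \<Rightarrow> 'n \<Rightarrow> real" where
  "gscale g A i j = (1 / sqrt (g i)) * A i j * (1 / sqrt (g j))"

end

theory Submission
  imports Defs
begin

text \<open>
  L_B is the weighted Laplacian of the network with line weights
  c_il = V0_i V0_l b_il cos(theta0_i - theta0_l); Assumption A makes them nonnegative and at most
  Vmax_i Vmax_l b_il. Hence x' L_B x = 1/2 sum c_il (x_i - x_l)^2 lies between 0 and
  sum gamma_i x_i^2, using (x_i - x_l)^2 <= 2 x_i^2 + 2 x_l^2.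
  For the Schur complement with v = L22^-1 L21 z, its quadratic form at z equals
  z' L11 z - v' L22 v, so it is at most z' L11 z; and it equals the form of L_B at the
  vector (z, -v), so it is nonnegative. Scaling by Gamma^-1/2 turns these bounds into 0 <= . <= I.
\<close>

definition quad_form :: "'a set \<Rightarrow> ('a \<Rightarrow> 'a \<Rightarrow> real) \<Rightarrow> ('a \<Rightarrow> real) \<Rightarrow> real" where
  "quad_form X A x = (\<Sum>i\<in>X. \<Sum>j\<in>X. x i * A i j * x j)"

definition laplacian :: "('a::finite \<Rightarrow> 'a \<Rightarrow> real) \<Rightarrow> 'a \<Rightarrow> 'a \<Rightarrow> real" where
  "laplacian c i j = (if i = j then (\<Sum>l\<in>UNIV. c i l) else 0) - c i j"

lemma laplacian_sym:
  assumes "\<And>i j. c i j = c j i"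
  shows "laplacian c i j = laplacian c j i"
  using assms by (simp add: laplacian_def)

lemma quad_form_laplacian:
  fixes c :: "'a::finite \<Rightarrow> 'a \<Rightarrow> real"
  assumes csym: "\<And>i j. c i j = c j i"
  shows "2 * quad_form UNIV (laplacian c) w = (\<Sum>i\<in>UNIV. \<Sum>l\<in>UNIV. c i l * (w i - w l)^2)"
proof -
  have row: "(\<Sum>j\<in>UNIV. w i * laplacian c i j * w j) = (\<Sum>l\<in>UNIV. c i l * w i * (w i - w l))" for i
  proof -
    have "(\<Sum>j\<in>UNIV. w i * laplacian c i j * w j)
        = (\<Sum>j\<in>UNIV. (if i = j then w i * (\<Sum>l\<in>UNIV. c i l) * w j else 0) - w i * c i j * w j)"
      by (intro sum.cong) (auto simp: laplacian_def algebra_simps)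
    also have "\<dots> = (\<Sum>l\<in>UNIV. c i l * w i * (w i - w l))"
      by (simp add: sum_subtractf sum_distrib_left sum_distrib_right algebra_simps)
    finally show ?thesis .
  qed
  have "(\<Sum>i\<in>UNIV. \<Sum>l\<in>UNIV. c i l * w i * (w i - w l)) = (\<Sum>i\<in>UNIV. \<Sum>l\<in>UNIV. c i l * w l * (w l - w i))"
    by (subst sum.swap) (simp add: csym)
  then have "2 * quad_form UNIV (laplacian c) w
      = (\<Sum>i\<in>UNIV. \<Sum>l\<in>UNIV. c i l * w i * (w i - w l) + c i l * w l * (w l - w i))"
    by (simp add: quad_form_def row sum.distrib)
  also have "\<dots> = (\<Sum>i\<in>UNIV. \<Sum>l\<in>UNIV. c i l * (w i - w l)^2)"
    by (intro sum.cong refl) (simp add: power2_eq_square algebra_simps)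
  finally show ?thesis .
qed

lemma quad_form_laplacian_nonneg:
  fixes c :: "'a::finite \<Rightarrow> 'a \<Rightarrow> real"
  assumes "\<And>i j. c i j = c j i" and "\<And>i j. 0 \<le> c i j"
  shows "0 \<le> quad_form UNIV (laplacian c) w"
proof -
  have "0 \<le> (\<Sum>i\<in>UNIV. \<Sum>l\<in>UNIV. c i l * (w i - w l)^2)"
    by (intro sum_nonneg mult_nonneg_nonneg assms(2)) simp
  then show ?thesis using quad_form_laplacian[of c w, OF assms(1)] by simp
qed

lemma quad_form_laplacian_le:
  fixes c :: "'a::finite \<Rightarrow> 'a \<Rightarrow> real"
  assumes csym: "\<And>i j. c i j = c j i" and cnn: "\<And>i j. 0 \<le> c i j"
  shows "quad_form UNIV (laplacian c) w \<le> (\<Sum>i\<in>UNIV. 2 * (\<Sum>l\<in>UNIV. c i l) * w i ^ 2)"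
proof -
  have "(\<Sum>i\<in>UNIV. \<Sum>l\<in>UNIV. c i l * (w i - w l)^2)
      \<le> (\<Sum>i\<in>UNIV. \<Sum>l\<in>UNIV. 2 * c i l * w i ^ 2 + 2 * c i l * w l ^ 2)"
  proof (intro sum_mono)
    fix i l
    have "(w i - w l)^2 \<le> 2 * w i ^ 2 + 2 * w l ^ 2"
      using zero_le_square[of "w i + w l"] by (simp add: power2_eq_square algebra_simps)
    from mult_left_mono[OF this cnn[of i l]]
    show "c i l * (w i - w l)^2 \<le> 2 * c i l * w i ^ 2 + 2 * c i l * w l ^ 2"
      by (simp add: algebra_simps)
  qed
  also have "\<dots> = 2 * (\<Sum>i\<in>UNIV. \<Sum>l\<in>UNIV. 2 * c i l * w i ^ 2)"
    by (simp add: sum.distrib) (subst (2) sum.swap, simp add: csym)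
  also have "\<dots> = 2 * (\<Sum>i\<in>UNIV. 2 * (\<Sum>l\<in>UNIV. c i l) * w i ^ 2)"
    by (simp add: sum_distrib_left sum_distrib_right algebra_simps)
  finally show ?thesis using quad_form_laplacian[of c w, OF csym] by simp
qed

lemma quad_form_extend_zero:
  fixes A :: "'a::finite \<Rightarrow> 'a \<Rightarrow> real"
  shows "quad_form X A z = quad_form UNIV A (\<lambda>i. if i \<in> X then z i else 0)"
    (is "_ = quad_form UNIV A ?z0")
proof -
  have "quad_form UNIV A ?z0 = (\<Sum>i\<in>UNIV. \<Sum>j\<in>X. ?z0 i * A i j * ?z0 j)"
    unfolding quad_form_def by (intro sum.cong refl sum.mono_neutral_right) auto
  also have "\<dots> = (\<Sum>i\<in>X. \<Sum>j\<in>X. ?z0 i * A i j * ?z0 j)"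
    by (intro sum.mono_neutral_right) auto
  finally show ?thesis
    unfolding quad_form_def by simp
qed

lemma quad_form_le_restrict:
  fixes A :: "'a::finite \<Rightarrow> 'a \<Rightarrow> real"
  assumes "\<And>w. quad_form UNIV A w \<le> (\<Sum>i\<in>UNIV. g i * w i ^ 2)"
  shows "quad_form X A z \<le> (\<Sum>i\<in>X. g i * z i ^ 2)"
proof -
  have "quad_form X A z \<le> (\<Sum>i\<in>UNIV. g i * (if i \<in> X then z i else 0) ^ 2)"
    unfolding quad_form_extend_zero[of X] by (rule assms)
  also have "\<dots> = (\<Sum>i\<in>X. g i * z i ^ 2)"
    by (rule sum.mono_neutral_cong_right) auto
  finally show ?thesis .
qed

lemma quad_form_block_split:
  fixes A :: "'a::finite \<Rightarrow> 'a \<Rightarrow> real"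
  assumes Asym: "\<And>i j. A i j = A j i"
  shows "quad_form UNIV A w
    = quad_form (-S) A w + 2 * (\<Sum>i\<in>-S. \<Sum>j\<in>S. w i * A i j * w j) + quad_form S A w"
proof -
  have split: "sum f UNIV = sum f (-S) + sum f S" for f :: "'a \<Rightarrow> real"
    using sum.subset_diff[of S UNIV f] by (simp add: Compl_eq_Diff_UNIV)
  have "(\<Sum>i\<in>S. \<Sum>j\<in>-S. w i * A i j * w j) = (\<Sum>i\<in>-S. \<Sum>j\<in>S. w i * A i j * w j)"
    by (subst sum.swap, intro sum.cong refl) (simp add: Asym[of _ j for j] ac_simps)
  then show ?thesis
    unfolding quad_form_def by (simp add: split sum.distrib)
qed

lemma quad_form_schur:
  fixes L M :: "'a::finite \<Rightarrow> 'a \<Rightarrow> real" and z :: "'a \<Rightarrow> real"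
  assumes Lsym: "\<And>i j. L i j = L j i" and inv: "is_block_inverse L S M"
  defines "u \<equiv> \<lambda>k. \<Sum>j\<in>-S. L k j * z j"
  defines "v \<equiv> \<lambda>k. \<Sum>l\<in>S. M k l * u l"
  shows "quad_form (-S) (schur L S M) z = quad_form (-S) L z - quad_form S L v"
    and "quad_form (-S) (schur L S M) z = quad_form UNIV L (\<lambda>k. if k \<in> S then - v k else z k)"
proof -
  have right_inv: "(\<Sum>p\<in>S. L k p * M p l) = (if k = l then 1 else 0)" if "k \<in> S" "l \<in> S" for k l
    using inv that unfolding is_block_inverse_def by blast
  have Lv: "(\<Sum>p\<in>S. L k p * v p) = u k" if "k \<in> S" for k
  proof -
    have "(\<Sum>p\<in>S. L k p * v p) = (\<Sum>l\<in>S. (\<Sum>p\<in>S. L k p * M p l) * u l)"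
      unfolding v_def by (simp add: sum_distrib_left sum_distrib_right mult.assoc) (rule sum.swap)
    also have "\<dots> = (\<Sum>l\<in>S. if k = l then u l else 0)"
      by (intro sum.cong refl) (simp add: right_inv that)
    also have "\<dots> = u k"
      using that by simp
    finally show ?thesis .
  qed
  have "quad_form S L v = (\<Sum>k\<in>S. v k * (\<Sum>p\<in>S. L k p * v p))"
    by (simp add: quad_form_def sum_distrib_left mult.assoc)
  also have "\<dots> = (\<Sum>k\<in>S. u k * v k)"
    by (intro sum.cong refl) (simp add: Lv)
  finally have vLv_eq: "quad_form S L v = (\<Sum>k\<in>S. u k * v k)" .
  have schur_form_eq: "quad_form (-S) (schur L S M) z = quad_form (-S) L z - (\<Sum>k\<in>S. u k * v k)"
  proof -
    have "(\<Sum>j\<in>-S. z i * (\<Sum>k\<in>S. \<Sum>l\<in>S. L i k * M k l * L l j) * z j)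
        = z i * (\<Sum>k\<in>S. L i k * v k)" for i
      unfolding u_def v_def
      by (simp add: sum_distrib_left sum_distrib_right mult.assoc sum.swap[of _ "-S"])
    then have "(\<Sum>i\<in>-S. \<Sum>j\<in>-S. z i * (\<Sum>k\<in>S. \<Sum>l\<in>S. L i k * M k l * L l j) * z j)
        = (\<Sum>i\<in>-S. z i * (\<Sum>k\<in>S. L i k * v k))"
      by simp
    also have "\<dots> = (\<Sum>k\<in>S. \<Sum>i\<in>-S. z i * L i k * v k)"
      by (subst sum.swap) (simp add: sum_distrib_left mult.assoc)
    also have "\<dots> = (\<Sum>k\<in>S. u k * v k)"
      unfolding u_def sum_distrib_right by (simp add: Lsym ac_simps)
    finally show ?thesis
      by (simp add: quad_form_def schur_def algebra_simps sum_subtractf)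
  qed
  define w where "w k = (if k \<in> S then - v k else z k)" for k
  have "(\<Sum>i\<in>-S. \<Sum>j\<in>S. w i * L i j * w j) = - (\<Sum>k\<in>S. u k * v k)"
  proof -
    have "(\<Sum>i\<in>-S. \<Sum>j\<in>S. w i * L i j * w j) = - (\<Sum>j\<in>S. \<Sum>i\<in>-S. z i * L i j * v j)"
      by (subst sum.swap) (simp add: w_def sum_negf)
    also have "\<dots> = - (\<Sum>k\<in>S. u k * v k)"
      unfolding u_def sum_distrib_right by (simp add: Lsym ac_simps)
    finally show ?thesis .
  qed
  moreover have "quad_form (-S) L w = quad_form (-S) L z" "quad_form S L w = quad_form S L v"
    unfolding quad_form_def w_def by simp_all
  ultimately show "quad_form (-S) (schur L S M) z = quad_form UNIV L w"
    using quad_form_block_split[of L w S, OF Lsym] vLv_eq schur_form_eq by simp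
  show "quad_form (-S) (schur L S M) z = quad_form (-S) L z - quad_form S L v"
    using vLv_eq schur_form_eq by simp
qed

lemma block_inverse_sym:
  fixes L M :: "'a::finite \<Rightarrow> 'a \<Rightarrow> real"
  assumes Lsym: "\<And>i j. L i j = L j i" and inv: "is_block_inverse L S M"
    and "k \<in> S" "l \<in> S"
  shows "M k l = M l k"
proof -
  have left_inv: "(\<Sum>p\<in>S. M a p * L p c) = (if a = c then 1 else 0)" if "a \<in> S" "c \<in> S" for a c
    using inv that unfolding is_block_inverse_def by blast
  have "M k l = (\<Sum>p\<in>S. M k p * (if p = l then 1 else 0))"
    using \<open>l \<in> S\<close> by (simp add: if_distrib cong: if_cong)
  also have "\<dots> = (\<Sum>p\<in>S. M k p * (\<Sum>q\<in>S. M l q * L q p))"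
    by (intro sum.cong refl) (use left_inv \<open>l \<in> S\<close> in auto)
  also have "\<dots> = (\<Sum>q\<in>S. M l q * (\<Sum>p\<in>S. M k p * L p q))"
    by (simp add: sum_distrib_left, subst sum.swap, intro sum.cong refl)
       (simp add: Lsym[of _ q for q] ac_simps)
  also have "\<dots> = (\<Sum>q\<in>S. M l q * (if k = q then 1 else 0))"
    by (intro sum.cong refl) (use left_inv \<open>k \<in> S\<close> in auto)
  also have "\<dots> = M l k"
    using \<open>k \<in> S\<close> by (simp add: if_distrib cong: if_cong)
  finally show ?thesis .
qed

lemma schur_sym:
  fixes L M :: "'a::finite \<Rightarrow> 'a \<Rightarrow> real"
  assumes Lsym: "\<And>i j. L i j = L j i" and inv: "is_block_inverse L S M"
  shows "schur L S M i j = schur L S M j i"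
proof -
  have "(\<Sum>k\<in>S. \<Sum>l\<in>S. L j k * M k l * L l i) = (\<Sum>l\<in>S. \<Sum>k\<in>S. L j k * M k l * L l i)"
    by (rule sum.swap)
  also have "\<dots> = (\<Sum>k\<in>S. \<Sum>l\<in>S. L i k * M k l * L l j)"
    by (intro sum.cong refl)
       (simp add: block_inverse_sym[OF Lsym inv] Lsym[of j] Lsym[of _ i])
  finally show ?thesis
    unfolding schur_def using Lsym[of i j] by simp
qed

lemma in_calL_gscale:
  assumes gpos: "\<And>i. i \<in> T \<Longrightarrow> 0 < g i"
    and Asym: "\<And>i j. A i j = A j i"
    and nonneg: "\<And>z. 0 \<le> quad_form T A z"
    and bound: "\<And>z. quad_form T A z \<le> (\<Sum>i\<in>T. g i * z i ^ 2)"
  shows "in_calL T (gscale g A)"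
proof -
  have scaled: "(\<Sum>i\<in>T. \<Sum>j\<in>T. x i * gscale g A i j * x j)
      = quad_form T A (\<lambda>i. x i / sqrt (g i))" for x
    by (simp add: gscale_def quad_form_def algebra_simps)
  have "(\<Sum>i\<in>T. g i * (x i / sqrt (g i)) ^ 2) = (\<Sum>i\<in>T. x i ^ 2)" for x
  proof (intro sum.cong refl)
    fix i assume "i \<in> T"
    then have "0 < g i" by (rule gpos)
    then show "g i * (x i / sqrt (g i)) ^ 2 = x i ^ 2"
      by (simp add: power_divide)
  qed
  then show ?thesis
    unfolding in_calL_def scaled
    using nonneg bound[of "\<lambda>i. _ i / sqrt (g i)"] by (simp add: gscale_def Asym)
qed

lemma schur_in_calL:
  fixes L M :: "'a::finite \<Rightarrow> 'a \<Rightarrow> real"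
  assumes Lsym: "\<And>i j. L i j = L j i"
    and Lpsd: "\<And>w. 0 \<le> quad_form UNIV L w"
    and Lbound: "\<And>w. quad_form UNIV L w \<le> (\<Sum>i\<in>UNIV. g i * w i ^ 2)"
    and gpos: "\<And>i. 0 < g i"
    and inv: "is_block_inverse L S M"
  shows "in_calL (-S) (gscale g (schur L S M))"
proof (rule in_calL_gscale)
  fix z
  show "0 \<le> quad_form (-S) (schur L S M) z"
    using quad_form_schur(2)[OF Lsym inv] Lpsd by simp
  have "quad_form (-S) (schur L S M) z \<le> quad_form (-S) L z"
    using quad_form_schur(1)[OF Lsym inv, of z] Lpsd
    by (simp add: quad_form_extend_zero[of S])
  also have "\<dots> \<le> (\<Sum>i\<in>-S. g i * z i ^ 2)"
    by (rule quad_form_le_restrict[OF Lbound])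
  finally show "quad_form (-S) (schur L S M) z \<le> (\<Sum>i\<in>-S. g i * z i ^ 2)" .
qed (use gpos schur_sym[OF Lsym inv] in auto)

definition line_weight :: "('n \<Rightarrow> 'n \<Rightarrow> real) \<Rightarrow> ('n \<Rightarrow> real) \<Rightarrow> ('n \<Rightarrow> real) \<Rightarrow> 'n \<Rightarrow> 'n \<Rightarrow> real" where
  "line_weight b V \<theta> i l = V i * V l * b i l * cos (\<theta> i - \<theta> l)"

lemma power_inj_has_derivative:
  fixes b :: "'n::finite \<Rightarrow> 'n \<Rightarrow> real"
  shows "((\<lambda>t. power_inj b V (\<theta>(j := t)) i) has_real_derivative laplacian (line_weight b V \<theta>) i j)
    (at (\<theta> j))"
proof -
  define d where "d k = (if k = j then 1 else (0::real))" for k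
  define e where "e k = (if k = j then 0 else \<theta> k)" for k
  have upd: "(\<theta>(j := t)) k = d k * t + e k" for t k
    by (simp add: d_def e_def)
  have at_\<theta>: "d k * \<theta> j + e k = \<theta> k" for k
    by (simp add: d_def e_def)
  have "((\<lambda>t. \<Sum>l\<in>UNIV. V i * V l * b i l * sin ((d i * t + e i) - (d l * t + e l)))
      has_real_derivative (\<Sum>l\<in>UNIV. V i * V l * b i l
        * (cos ((d i * \<theta> j + e i) - (d l * \<theta> j + e l)) * (d i - d l)))) (at (\<theta> j))"
    by (auto intro!: derivative_eq_intros simp: algebra_simps)
  moreover have "(\<Sum>l\<in>UNIV. line_weight b V \<theta> i l * (d i - d l)) = laplacian (line_weight b V \<theta>) i j"
  proof -
    have "(\<Sum>l\<in>UNIV. line_weight b V \<theta> i l * (d i - d l))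
        = (\<Sum>l\<in>UNIV. (if i = j then line_weight b V \<theta> i l else 0)
            - (if l = j then line_weight b V \<theta> i l else 0))"
      by (intro sum.cong refl) (simp add: d_def)
    then show ?thesis
      by (simp add: laplacian_def sum_subtractf)
  qed
  ultimately show ?thesis
    unfolding power_inj_def upd at_\<theta> by (simp add: line_weight_def mult.assoc)
qed

lemma LB_eq_laplacian: "LB b V0 \<theta>0 = laplacian (line_weight b V0 \<theta>0)"
  unfolding LB_def by (intro ext DERIV_imp_deriv power_inj_has_derivative)

lemma line_weight_sym:
  assumes "\<And>i l. b i l = b l i"
  shows "line_weight b V \<theta> i l = line_weight b V \<theta> l i"
  using assms cos_minus[of "\<theta> l - \<theta> i"] by (simp add: line_weight_def)

lemma line_weight_bounds:
  assumes b_nonneg: "\<And>i l. 0 \<le> b i l" and A: "assumptionA b Vmax V0 \<theta>0"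
  shows "0 \<le> line_weight b V0 \<theta>0 i l" and "line_weight b V0 \<theta>0 i l \<le> Vmax i * Vmax l * b i l"
proof -
  have V0: "0 < V0 k" "V0 k \<le> Vmax k" for k
    using A by (auto simp: assumptionA_def)
  have cos_nonneg: "0 \<le> b i l * cos (\<theta>0 i - \<theta>0 l)"
  proof (cases "b i l = 0")
    case False
    with b_nonneg[of i l] have "0 < b i l" by simp
    with A have "\<bar>\<theta>0 i - \<theta>0 l\<bar> < pi / 2" by (simp add: assumptionA_def)
    then have "0 < cos (\<theta>0 i - \<theta>0 l)" by (intro cos_gt_zero_pi) linarith+
    with \<open>0 < b i l\<close> show ?thesis by simp
  qed simp
  moreover have "0 \<le> V0 i * V0 l"
    using V0(1)[of i] V0(1)[of l] by simp
  ultimately show "0 \<le> line_weight b V0 \<theta>0 i l"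
    unfolding line_weight_def by (metis mult.assoc mult_nonneg_nonneg)
  have "line_weight b V0 \<theta>0 i l \<le> V0 i * V0 l * b i l"
    using V0[of i] V0[of l] b_nonneg[of i l]
    by (simp add: line_weight_def mult_left_le)
  also have "\<dots> \<le> Vmax i * Vmax l * b i l"
    using V0[of i] V0[of l] b_nonneg[of i l] by (intro mult_right_mono mult_mono) auto
  finally show "line_weight b V0 \<theta>0 i l \<le> Vmax i * Vmax l * b i l" .
qed

lemma quad_form_LB_le_gam:
  fixes b :: "'n::finite \<Rightarrow> 'n \<Rightarrow> real"
  assumes b_sym: "\<And>i l. b i l = b l i" and b_nonneg: "\<And>i l. 0 \<le> b i l"
    and A: "assumptionA b Vmax V0 \<theta>0"
  shows "quad_form UNIV (LB b V0 \<theta>0) w \<le> (\<Sum>i\<in>UNIV. gam b Vmax i * w i ^ 2)"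
proof -
  have "quad_form UNIV (LB b V0 \<theta>0) w
      \<le> (\<Sum>i\<in>UNIV. 2 * (\<Sum>l\<in>UNIV. line_weight b V0 \<theta>0 i l) * w i ^ 2)"
    unfolding LB_eq_laplacian
    by (intro quad_form_laplacian_le line_weight_sym[OF b_sym] line_weight_bounds(1)[OF b_nonneg A])
  also have "\<dots> \<le> (\<Sum>i\<in>UNIV. gam b Vmax i * w i ^ 2)"
    unfolding gam_def
    by (intro sum_mono mult_right_mono mult_left_mono line_weight_bounds(2)[OF b_nonneg A]) auto
  finally show ?thesis .
qed

theorem lemma1:
  fixes b :: "'n::finite \<Rightarrow> 'n \<Rightarrow> real"
    and Vmax V0 \<theta>0 :: "'n \<Rightarrow> real"
  assumes b_sym: "\<forall>i l. b i l = b l i"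
    and b_nonneg: "\<forall>i l. 0 \<le> b i l"
    and b_diag: "\<forall>i. b i i = 0"
    and Vmax_pos: "\<forall>i. 0 < Vmax i"
    and A: "assumptionA b Vmax V0 \<theta>0"
    and gam_pos: "\<forall>i. 0 < gam b Vmax i"
  shows "(\<forall>S M. is_block_inverse (LB b V0 \<theta>0) S M \<longrightarrow>
            in_calL (- S) (gscale (gam b Vmax) (schur (LB b V0 \<theta>0) S M)))
         \<and> in_calL UNIV (gscale (gam b Vmax) (LB b V0 \<theta>0))"
proof -
  note b_sym = b_sym[rule_format] and b_nonneg = b_nonneg[rule_format]
  have Lsym: "LB b V0 \<theta>0 i j = LB b V0 \<theta>0 j i" for i j
    unfolding LB_eq_laplacian by (intro laplacian_sym line_weight_sym b_sym)
  have Lpsd: "0 \<le> quad_form UNIV (LB b V0 \<theta>0) w" for w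
    unfolding LB_eq_laplacian
    by (intro quad_form_laplacian_nonneg line_weight_sym[OF b_sym] line_weight_bounds(1)[OF b_nonneg A])
  have schur: "in_calL (- S) (gscale (gam b Vmax) (schur (LB b V0 \<theta>0) S M))"
    if "is_block_inverse (LB b V0 \<theta>0) S M" for S M
    using schur_in_calL[OF Lsym Lpsd quad_form_LB_le_gam[OF b_sym b_nonneg A]] gam_pos that
    by blast
  have "is_block_inverse (LB b V0 \<theta>0) {} M" and "schur (LB b V0 \<theta>0) {} M = LB b V0 \<theta>0" for M
    by (auto simp: is_block_inverse_def schur_def fun_eq_iff)
  with schur[of "{}"] schur show ?thesis
    by auto
qed

end
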